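(* (a) There exists a tree-shift of finite type $X=\mathsf{X}_{\mathcal{F}}$, with $\mathcal{F}$ a finite set of patterns, which is strongly irreducible but not uniformly block gluing. (b) There exists a tree-shift which is uniformly block gluing but not strongly irreducible.
   Context: $\Sigma=\{0,1\}$. $\Sigma^*$ is the set of finite words, with $\epsilon$ the empty word. $|x|$ is the length of $x$, $\Sigma^k$ is the set of words of length $k$, and $\Sigma_n=\bigcup_{0\le k\le n}\Sigma^k$. A tree is $t:\Sigma^*\to\mathcal{A}$ with $\mathcal{A}$ finite, and we write $t_x=t(x)$. A pattern $u$ is a map on a finite prefix-closed support $S(u)$. A tree-shift is $\mathsf{X}_{\mathcal{F}}$, the set of trees in which no pattern of $\mathcal{F}$ occurs at any node. A pattern is accepted by $X$ if it occurs in some $t\in X$. $B_n(X)=\{t|_{\Sigma_{n-1}}:t\in X\}$. For $w\in\Sigma^*$, $t|_{wS(v)}=v$ means $t_{wy}=v_y$ for all $y\in S(v)$. A leaf of $u$ is $w\in S(u)$ with $w0,w1\notin S(u)$. A complete prefix code (CPC) is a finite set $P\subseteq\Sigma^*\setminus\{\epsilon\}$ such that no word of $P$ is a prefix of another, and every $x$ with $|x|\ge\max_{y\in P}|y|$ has a prefix in $P$. Patterns $u,v$ are connected through $P$ if there is $t\in X$ with $t|_{S(u)}=u$ and $t|_{wxS(v)}=v$ for every leaf $w$ of $u$ and every $x\in P$. $X$ is: - block gluing if there is a CPC $P$ such that for every $n\ge1$ any $u,v\in B_n(X)$ are connected through $P$; - uniformly block gluing if this holds with $P=\Sigma^k$ for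 some $k\ge1$; - strongly irreducible if there is a CPC $P$ through which any two patterns accepted by $X$ are connected; - uniformly strongly irreducible if this holds with $P=\Sigma^k$ for some $k\ge1$. *)

theory Defs
  imports Main "HOL-Library.Sublist"
begin

(* Sigma = {0,1} is represented by bool (False = 0, True = 1); words are bool lists,
   concatenation is @.
   A pattern is a partial map u :: bool list => nat option whose domain S(u) is its support. *)

type_synonym tree = "bool list \<Rightarrow> nat"
type_synonym pattern = "bool list \<Rightarrow> nat option"

definition is_tree :: "nat set \<Rightarrow> tree \<Rightarrow> bool" where
  "is_tree A t \<longleftrightarrow> (\<forall>x. t x \<in> A)"

definition is_pattern :: "nat set \<Rightarrow> pattern \<Rightarrow> bool" where
  "is_pattern A u \<longleftrightarrow> finite (dom u) \<and> dom u \<noteq> {} \<and>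
     (\<forall>x y. x @ y \<in> dom u \<longrightarrow> x \<in> dom u) \<and> ran u \<subseteq> A"

definition occurs_at :: "pattern \<Rightarrow> tree \<Rightarrow> bool list \<Rightarrow> bool" where
  "occurs_at u t w \<longleftrightarrow> (\<forall>y \<in> dom u. Some (t (w @ y)) = u y)"

definition tree_shift :: "nat set \<Rightarrow> pattern set \<Rightarrow> tree set" where
  "tree_shift A F = {t. is_tree A t \<and> (\<forall>u\<in>F. \<forall>w. \<not> occurs_at u t w)}"

definition accepted :: "tree set \<Rightarrow> pattern \<Rightarrow> bool" where
  "accepted X u \<longleftrightarrow> (\<exists>t\<in>X. \<exists>w. occurs_at u t w)"

definition restr :: "tree \<Rightarrow> bool list set \<Rightarrow> pattern" where
  "restr t S = (\<lambda>x. if x \<in> S then Some (t x) else None)"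

definition blocks :: "tree set \<Rightarrow> nat \<Rightarrow> pattern set" where
  "blocks X n = {restr t {x. length x \<le> n - 1} | t. t \<in> X}"

definition leaf :: "pattern \<Rightarrow> bool list \<Rightarrow> bool" where
  "leaf u w \<longleftrightarrow> w \<in> dom u \<and> w @ [False] \<notin> dom u \<and> w @ [True] \<notin> dom u"

definition complete_prefix_code :: "bool list set \<Rightarrow> bool" where
  "complete_prefix_code P \<longleftrightarrow> finite P \<and> P \<noteq> {} \<and> [] \<notin> P \<and>
     (\<forall>p\<in>P. \<forall>q\<in>P. prefix p q \<longrightarrow> p = q) \<and>
     (\<forall>x. length x \<ge> Max (length ` P) \<longrightarrow> (\<exists>p\<in>P. prefix p x))"

definition connected_through :: "tree set \<Rightarrow> bool list set \<Rightarrow> pattern \<Rightarrow> pattern \<Rightarrow> bool" where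
  "connected_through X P u v \<longleftrightarrow>
     (\<exists>t\<in>X. occurs_at u t [] \<and> (\<forall>w x. leaf u w \<longrightarrow> x \<in> P \<longrightarrow> occurs_at v t (w @ x)))"

definition block_gluing :: "tree set \<Rightarrow> bool" where
  "block_gluing X \<longleftrightarrow> (\<exists>P. complete_prefix_code P \<and>
     (\<forall>n\<ge>1. \<forall>u\<in>blocks X n. \<forall>v\<in>blocks X n. connected_through X P u v))"

definition uniformly_block_gluing :: "tree set \<Rightarrow> bool" where
  "uniformly_block_gluing X \<longleftrightarrow> (\<exists>k\<ge>1.
     (\<forall>n\<ge>1. \<forall>u\<in>blocks X n. \<forall>v\<in>blocks X n. connected_through X {x. length x = k} u v))"

definition strongly_irreducible :: "nat set \<Rightarrow> tree set \<Rightarrow> bool" where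
  "strongly_irreducible A X \<longleftrightarrow> (\<exists>P. complete_prefix_code P \<and>
     (\<forall>u v. is_pattern A u \<longrightarrow> is_pattern A v \<longrightarrow> accepted X u \<longrightarrow> accepted X v \<longrightarrow>
        connected_through X P u v))"

definition uniformly_strongly_irreducible :: "nat set \<Rightarrow> tree set \<Rightarrow> bool" where
  "uniformly_strongly_irreducible A X \<longleftrightarrow> (\<exists>k\<ge>1.
     (\<forall>u v. is_pattern A u \<longrightarrow> is_pattern A v \<longrightarrow> accepted X u \<longrightarrow> accepted X v \<longrightarrow>
        connected_through X {x. length x = k} u v))"

end

theory Submission
  imports Defs
begin

text \<open>
  (a) Forbidding a node whose two children share its label forces every node of a binary tree to
  have a child with the other label. Following such children, labels alternate, so from two
  nodes with different labels one reaches, at any common distance \<open>k\<close>, labels of different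
  parity. Hence the depth-one block with root 0 and children 0, 1 cannot be repeated at distance
  \<open>k\<close> below both its children. Strong irreducibility holds through the code \<open>{0, 10, 11}\<close>:
  below a leaf one inserts a node with children \<open>v\<close> and the complement of the root of \<open>v\<close>, one of
  which differs from the leaf, and copies of \<open>v\<close> below both children of the complement.

  (b) Forbidding two different labels on one level leaves the level-constant trees. Blocks of
  equal depth can be stacked, but patterns glued below leaves of different depths of a pattern
  must agree on their common levels.
\<close>

definition prefix_closed :: "bool list set \<Rightarrow> bool" where
  "prefix_closed S \<longleftrightarrow> (\<forall>x y. x @ y \<in> S \<longrightarrow> x \<in> S)"

lemma is_pattern_prefix_closed: "is_pattern A u \<Longrightarrow> prefix_closed (dom u)"
  by (simp add: is_pattern_def prefix_closed_def)

lemma dom_restr [simp]: "dom (restr t S) = S"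
  by (auto simp: restr_def dom_def)

lemma restr_apply [simp]: "x \<in> S \<Longrightarrow> restr t S x = Some (t x)"
  by (simp add: restr_def)

lemma ran_restr: "is_tree A t \<Longrightarrow> ran (restr t S) \<subseteq> A"
  by (auto simp: ran_def restr_def is_tree_def split: if_split_asm)

lemma is_pattern_restr:
  assumes "finite S" "S \<noteq> {}" "prefix_closed S" "is_tree A t"
  shows "is_pattern A (restr t S)"
  using assms ran_restr[OF assms(4)] by (simp add: is_pattern_def prefix_closed_def)

lemma occurs_at_restr_iff: "occurs_at (restr s S) t w \<longleftrightarrow> (\<forall>y\<in>S. t (w @ y) = s y)"
  by (auto simp: occurs_at_def restr_def split: if_splits)

lemma occurs_at_restr_root: "occurs_at (restr t S) t []"
  by (simp add: occurs_at_restr_iff)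

lemma leaf_restr_levels: "leaf (restr t {x. length x \<le> m}) w \<longleftrightarrow> length w = m"
  by (auto simp: leaf_def)

lemma tree_shift_shift: "t \<in> tree_shift A F \<Longrightarrow> (\<lambda>x. t (w @ x)) \<in> tree_shift A F"
  unfolding tree_shift_def is_tree_def occurs_at_def
  by (auto, metis append.assoc)

lemma accepted_tree_shift_root:
  assumes "accepted (tree_shift A F) u"
  obtains t where "t \<in> tree_shift A F" "occurs_at u t []"
proof -
  from assms obtain t w where "t \<in> tree_shift A F" "occurs_at u t w"
    by (auto simp: accepted_def)
  then show thesis
    by (intro that[of "\<lambda>x. t (w @ x)"]) (auto simp: tree_shift_shift occurs_at_def)
qed

lemma leaf_extension:
  assumes "prefix_closed (dom u)" "leaf u w" "w @ y \<in> dom u"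
  shows "y = []"
proof (cases y)
  case (Cons c r)
  with assms(1,3) have "w @ [c] \<in> dom u"
    unfolding prefix_closed_def by (metis append.assoc append_Cons append_Nil)
  with assms(2) show ?thesis by (cases c) (auto simp: leaf_def)
qed

lemma leaf_prefix_unique:
  assumes "prefix_closed (dom u)" "leaf u w1" "leaf u w2" "prefix w1 x" "prefix w2 x"
  shows "w1 = w2"
proof -
  have "w1 = w2" if "leaf u w1" "leaf u w2" "prefix w1 w2" for w1 w2
  proof -
    from that(3) obtain y where "w2 = w1 @ y" by (auto simp: prefix_def)
    with that(2) leaf_extension[OF assms(1) that(1), of y] show ?thesis
      by (simp add: leaf_def)
  qed
  with assms prefix_same_cases[OF assms(4,5)] show ?thesis by metis
qed

definition graft :: "pattern \<Rightarrow> tree \<Rightarrow> (bool list \<Rightarrow> tree) \<Rightarrow> tree" where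
  "graft u s r x =
     (if \<exists>w. leaf u w \<and> prefix w x
      then let w = THE w. leaf u w \<and> prefix w x in r w (drop (length w) x)
      else s x)"

lemma graft_below:
  assumes "prefix_closed (dom u)" "leaf u w"
  shows "graft u s r (w @ y) = r w y"
proof -
  have "(THE w'. leaf u w' \<and> prefix w' (w @ y)) = w"
    using assms leaf_prefix_unique[OF assms(1)] by (intro the_equality) auto
  with assms(2) show ?thesis by (auto simp: graft_def)
qed

lemma graft_outside: "\<not> (\<exists>w. leaf u w \<and> prefix w x) \<Longrightarrow> graft u s r x = s x"
  unfolding graft_def by (rule if_not_P)

context
  fixes u :: pattern and s :: tree and r :: "bool list \<Rightarrow> tree"
  assumes closed: "prefix_closed (dom u)"
    and consistent: "\<And>w. leaf u w \<Longrightarrow> r w [] = s w"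
begin

lemma graft_on_dom: "x \<in> dom u \<Longrightarrow> graft u s r x = s x"
proof (cases "\<exists>w. leaf u w \<and> prefix w x")
  case True
  then obtain w y where "leaf u w" "x = w @ y" by (auto simp: prefix_def)
  moreover assume "x \<in> dom u"
  ultimately have "y = []" using leaf_extension[OF closed] by blast
  with \<open>leaf u w\<close> \<open>x = w @ y\<close> show ?thesis
    using graft_below[OF closed, of w s r "[]"] consistent by simp
qed (rule graft_outside)

text \<open>Around every node the grafted tree looks like one of the trees it is made of.\<close>

lemma graft_locally:
  obtains \<tau> z' where "\<tau> = s \<or> (\<exists>w. leaf u w \<and> \<tau> = r w)"
    and "graft u s r z = \<tau> z'" and "\<And>b. graft u s r (z @ [b]) = \<tau> (z' @ [b])"
proof (cases "\<exists>w. leaf u w \<and> prefix w z")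
  case True
  then obtain w y where "leaf u w" "z = w @ y" by (auto simp: prefix_def)
  then show thesis
    using that[of "r w" y] graft_below[OF closed] by auto
next
  case False
  have "graft u s r (z @ [b]) = s (z @ [b])" for b
  proof (cases "\<exists>w. leaf u w \<and> prefix w (z @ [b])")
    case True
    with False obtain w where "leaf u w" "w = z @ [b]" by auto
    then show ?thesis using graft_below[OF closed, of w s r "[]"] consistent by simp
  qed (rule graft_outside)
  with False show thesis using that[of s z] graft_outside by auto
qed

end

definition binary :: "nat set" where
  "binary = {0, 1}"

definition fork_support :: "bool list set" where
  "fork_support = {[], [False], [True]}"

definition monochrome_fork :: "nat \<Rightarrow> pattern" where
  "monochrome_fork a = restr (\<lambda>_. a) fork_support"

definition forks :: "pattern set" where
  "forks = {monochrome_fork 0, monochrome_fork 1}"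

lemma finite_binary: "finite binary"
  by (simp add: binary_def)

lemma finite_forks: "finite forks"
  by (simp add: forks_def)

lemma prefix_closed_fork_support: "prefix_closed fork_support"
  by (auto simp: fork_support_def prefix_closed_def append_eq_Cons_conv)

lemma is_pattern_forks: "u \<in> forks \<Longrightarrow> is_pattern binary u"
  unfolding forks_def monochrome_fork_def
  by (safe; intro is_pattern_restr prefix_closed_fork_support)
    (simp_all add: fork_support_def is_tree_def binary_def)

lemma occurs_at_monochrome_fork:
  "occurs_at (monochrome_fork a) t w \<longleftrightarrow> t w = a \<and> t (w @ [False]) = a \<and> t (w @ [True]) = a"
  by (simp add: monochrome_fork_def occurs_at_restr_iff fork_support_def)

lemma tree_shift_forks_iff:
  "t \<in> tree_shift binary forks \<longleftrightarrow> is_tree binary t \<and> (\<forall>z. \<exists>b. t (z @ [b]) \<noteq> t z)"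
proof -
  have "(\<forall>u\<in>forks. \<forall>w. \<not> occurs_at u t w) \<longleftrightarrow> (\<forall>z. \<exists>b. t (z @ [b]) \<noteq> t z)"
    if "is_tree binary t"
  proof -
    have "(\<exists>u\<in>forks. occurs_at u t z) \<longleftrightarrow> (\<forall>b. t (z @ [b]) = t z)" for z
    proof -
      have "t z = 0 \<or> t z = 1" using that by (simp add: is_tree_def binary_def)
      then show ?thesis by (auto simp: forks_def occurs_at_monochrome_fork all_bool_eq)
    qed
    then show ?thesis by blast
  qed
  then show ?thesis by (auto simp: tree_shift_def)
qed

text \<open>Always stepping to a child with the other label.\<close>

lemma forks_alternating_path:
  assumes "t \<in> tree_shift binary forks"
  shows "\<exists>x. length x = k \<and> t (z @ x) = (t z + k) mod 2"
proof (induction k)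
  case 0
  have "t z \<in> {0, 1}" using assms unfolding tree_shift_forks_iff by (simp add: is_tree_def binary_def)
  then show ?case by auto
next
  case (Suc k)
  then obtain x where x: "length x = k" "t (z @ x) = (t z + k) mod 2" by blast
  from assms obtain b where b: "t (z @ x @ [b]) \<noteq> t (z @ x)"
    unfolding tree_shift_forks_iff by (metis append.assoc)
  have "t (z @ x @ [b]) \<in> {0, 1}" "t (z @ x) \<in> {0, 1}"
    using assms unfolding tree_shift_forks_iff by (simp_all add: is_tree_def binary_def)
  with b x(2) have "t (z @ x @ [b]) = (t z + Suc k) mod 2" by auto presburger+
  with x(1) show ?case by (intro exI[of _ "x @ [b]"]) auto
qed

lemma graft_in_tree_shift_forks:
  assumes "prefix_closed (dom u)" "\<And>w. leaf u w \<Longrightarrow> r w [] = s w"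
    and "s \<in> tree_shift binary forks" "\<And>w. leaf u w \<Longrightarrow> r w \<in> tree_shift binary forks"
  shows "graft u s r \<in> tree_shift binary forks"
  unfolding tree_shift_forks_iff is_tree_def
proof (intro conjI allI)
  fix z
  obtain \<tau> z' where \<tau>: "\<tau> = s \<or> (\<exists>w. leaf u w \<and> \<tau> = r w)"
    and at: "graft u s r z = \<tau> z'" "\<And>b. graft u s r (z @ [b]) = \<tau> (z' @ [b])"
    using graft_locally[where u = u and s = s and r = r and z = z, OF assms(1,2)] by blast
  from \<tau> assms(3,4) have "\<tau> \<in> tree_shift binary forks" by blast
  show "graft u s r z \<in> binary" "\<exists>b. graft u s r (z @ [b]) \<noteq> graft u s r z"
    using \<open>\<tau> \<in> tree_shift binary forks\<close> at by (auto simp: tree_shift_forks_iff is_tree_def)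
qed

text \<open>The tree glued below a leaf labelled \<open>a\<close>: the children of its root carry
  \<open>v\<close> and the complementary label, so that one of them differs from \<open>a\<close>.\<close>

fun bridge :: "nat \<Rightarrow> tree \<Rightarrow> tree" where
  "bridge a v [] = a"
| "bridge a v (False # y) = v y"
| "bridge a v [True] = 1 - v []"
| "bridge a v (True # b # y) = v y"

definition bridge_code :: "bool list set" where
  "bridge_code = {[False], [True, False], [True, True]}"

lemma complete_prefix_code_bridge_code: "complete_prefix_code bridge_code"
proof -
  have "\<exists>p\<in>bridge_code. prefix p x" if "length x \<ge> 2" for x :: "bool list"
  proof -
    from that obtain a b y where "x = a # b # y"
      by (metis Suc_le_length_iff numeral_2_eq_2)
    then show ?thesis by (cases a; cases b) (auto simp: bridge_code_def)
  qed
  moreover have "Max (length ` bridge_code) = 2" by (simp add: bridge_code_def)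
  ultimately show ?thesis by (auto simp: complete_prefix_code_def bridge_code_def)
qed

lemma bridge_append_bridge_code: "x \<in> bridge_code \<Longrightarrow> bridge a v (x @ y) = v y"
  by (auto simp: bridge_code_def)

lemma bridge_in_tree_shift_forks:
  assumes "a \<in> binary" "v \<in> tree_shift binary forks"
  shows "bridge a v \<in> tree_shift binary forks"
proof -
  have v: "v y \<in> {0, 1}" "\<exists>b. v (y @ [b]) \<noteq> v y" for y
    using assms(2) unfolding tree_shift_forks_iff by (auto simp: is_tree_def binary_def)
  have complement: "1 - v [] \<noteq> v []" using v(1)[of "[]"] by auto
  have "bridge a v x \<in> {0, 1}" for x
    using assms(1) v(1) by (cases "(a, v, x)" rule: bridge.cases) (auto simp: binary_def)
  moreover have "\<exists>b. bridge a v (z @ [b]) \<noteq> bridge a v z" for z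
    using assms(1) v complement by (cases "(a, v, z)" rule: bridge.cases)
      (auto simp: binary_def all_bool_eq ex_bool_eq)
  ultimately show ?thesis unfolding tree_shift_forks_iff by (simp add: is_tree_def binary_def)
qed

lemma strongly_irreducible_forks: "strongly_irreducible binary (tree_shift binary forks)"
  unfolding strongly_irreducible_def
proof (intro exI[of _ bridge_code] conjI allI impI complete_prefix_code_bridge_code)
  fix u v
  assume "is_pattern binary u" "is_pattern binary v"
    and "accepted (tree_shift binary forks) u" "accepted (tree_shift binary forks) v"
  from \<open>is_pattern binary u\<close> have closed: "prefix_closed (dom u)"
    by (rule is_pattern_prefix_closed)
  obtain tu where tu: "tu \<in> tree_shift binary forks" "occurs_at u tu []"
    using \<open>accepted (tree_shift binary forks) u\<close> by (rule accepted_tree_shift_root)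
  obtain tv where tv: "tv \<in> tree_shift binary forks" "occurs_at v tv []"
    using \<open>accepted (tree_shift binary forks) v\<close> by (rule accepted_tree_shift_root)
  define r where "r w = bridge (tu w) tv" for w
  have consistent: "r w [] = tu w" for w by (simp add: r_def)
  have "tu w \<in> binary" for w using tu(1) by (simp add: tree_shift_def is_tree_def)
  then have "r w \<in> tree_shift binary forks" for w
    unfolding r_def using tv(1) by (rule bridge_in_tree_shift_forks)
  then have t: "graft u tu r \<in> tree_shift binary forks"
    using graft_in_tree_shift_forks[OF closed _ tu(1)] consistent by blast
  show "connected_through (tree_shift binary forks) bridge_code u v"
    unfolding connected_through_def
  proof (intro bexI[OF _ t] conjI allI impI)
    show "occurs_at u (graft u tu r) []"
      using tu(2) graft_on_dom[where u = u and s = tu and r = r] closed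
      by (simp add: occurs_at_def r_def)
  next
    fix w x assume "leaf u w" "x \<in> bridge_code"
    then have "graft u tu r (w @ x @ y) = tv y" for y
      by (simp add: graft_below[OF closed] r_def bridge_append_bridge_code)
    with tv(2) show "occurs_at v (graft u tu r) (w @ x)" by (simp add: occurs_at_def)
  qed
qed

definition alternating :: tree where
  "alternating x = length x mod 2"

lemma alternating_in_tree_shift_forks: "alternating \<in> tree_shift binary forks"
  unfolding tree_shift_forks_iff by (auto simp: is_tree_def binary_def alternating_def) presburger

lemma not_uniformly_block_gluing_forks: "\<not> uniformly_block_gluing (tree_shift binary forks)"
proof
  assume "uniformly_block_gluing (tree_shift binary forks)"
  then obtain k where glue: "\<And>u v. u \<in> blocks (tree_shift binary forks) 2 \<Longrightarrow>
      v \<in> blocks (tree_shift binary forks) 2 \<Longrightarrow>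
      connected_through (tree_shift binary forks) {x. length x = k} u v"
    unfolding uniformly_block_gluing_def by (metis one_le_numeral)
  define s where "s = bridge 0 alternating"
  define u where "u = restr s {x. length x \<le> 1}"
  have "s \<in> tree_shift binary forks"
    unfolding s_def
    by (rule bridge_in_tree_shift_forks[OF _ alternating_in_tree_shift_forks]) (simp add: binary_def)
  then have "u \<in> blocks (tree_shift binary forks) 2" by (auto simp: blocks_def u_def)
  then obtain t where t: "t \<in> tree_shift binary forks" "occurs_at u t []"
    and below: "\<And>w x. leaf u w \<Longrightarrow> length x = k \<Longrightarrow> occurs_at u t (w @ x)"
    using glue unfolding connected_through_def by blast
  have children: "t [False] = 0" "t [True] = 1"
    using t(2) by (auto simp: u_def occurs_at_restr_iff s_def alternating_def)
  have "t ([b] @ x) = 0" if "length x = k" for b x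
  proof -
    have "\<forall>y. length y \<le> 1 \<longrightarrow> t ([b] @ x @ y) = s y"
      using below[of "[b]" x] that by (simp add: u_def leaf_restr_levels occurs_at_restr_iff)
    from this[rule_format, of "[]"] show ?thesis by (simp add: s_def)
  qed
  moreover obtain x y where "length x = k" "t ([False] @ x) = (t [False] + k) mod 2"
    and "length y = k" "t ([True] @ y) = (t [True] + k) mod 2"
    using forks_alternating_path[OF t(1)] by meson
  ultimately show False using children by simp presburger
qed

definition level_constant :: "tree \<Rightarrow> bool" where
  "level_constant t \<longleftrightarrow> (\<forall>x y. length x = length y \<longrightarrow> t x = t y)"

lemma level_constantD: "level_constant t \<Longrightarrow> length x = length y \<Longrightarrow> t x = t y"
  unfolding level_constant_def by blast

definition level_breaking :: "nat set \<Rightarrow> pattern set" where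
  "level_breaking A = {u. is_pattern A u \<and>
     (\<exists>x\<in>dom u. \<exists>y\<in>dom u. length x = length y \<and> u x \<noteq> u y)}"

lemma tree_shift_level_breaking_iff:
  "t \<in> tree_shift A (level_breaking A) \<longleftrightarrow> is_tree A t \<and> level_constant t"
proof
  assume t: "t \<in> tree_shift A (level_breaking A)"
  have "t x = t y" if "length x = length y" for x y
  proof (rule ccontr)
    assume "t x \<noteq> t y"
    define S where "S = {z. prefix z x \<or> prefix z y}"
    have "finite S"
      by (rule finite_subset[of _ "set (prefixes x) \<union> set (prefixes y)"]) (auto simp: S_def)
    moreover have "prefix_closed S" by (auto simp: S_def prefix_closed_def prefix_def)
    moreover have "is_tree A t" using t by (simp add: tree_shift_def)
    ultimately have "is_pattern A (restr t S)"
      by (intro is_pattern_restr) (auto simp: S_def)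
    moreover have "x \<in> S" "y \<in> S" by (auto simp: S_def)
    ultimately have "restr t S \<in> level_breaking A"
      using \<open>t x \<noteq> t y\<close> that unfolding level_breaking_def by auto
    with t show False using occurs_at_restr_root[of t S] by (auto simp: tree_shift_def)
  qed
  then have "level_constant t" unfolding level_constant_def by blast
  with t show "is_tree A t \<and> level_constant t" by (simp add: tree_shift_def)
next
  assume t: "is_tree A t \<and> level_constant t"
  have "\<not> occurs_at u t w" if "u \<in> level_breaking A" for u w
  proof
    assume occ: "occurs_at u t w"
    from that obtain x y where "x \<in> dom u" "y \<in> dom u" "length x = length y" "u x \<noteq> u y"
      by (auto simp: level_breaking_def)
    moreover have "t (w @ x) = t (w @ y)"
      using t \<open>length x = length y\<close> level_constantD[of t "w @ x" "w @ y"] by simp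
    ultimately show False using occ by (metis occurs_at_def)
  qed
  with t show "t \<in> tree_shift A (level_breaking A)" by (simp add: tree_shift_def)
qed

lemma uniformly_block_gluing_level_breaking:
  "uniformly_block_gluing (tree_shift A (level_breaking A))"
  unfolding uniformly_block_gluing_def
proof (intro exI[of _ 1] conjI allI impI ballI)
  fix n :: nat and u v
  assume "n \<ge> 1" "u \<in> blocks (tree_shift A (level_breaking A)) n"
    "v \<in> blocks (tree_shift A (level_breaking A)) n"
  then obtain tu tv where tu: "tu \<in> tree_shift A (level_breaking A)" "u = restr tu {x. length x \<le> n - 1}"
    and tv: "tv \<in> tree_shift A (level_breaking A)" "v = restr tv {x. length x \<le> n - 1}"
    by (auto simp: blocks_def)
  define t where "t x = (if length x < n then tu x else tv (drop n x))" for x :: "bool list"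
  have "is_tree A t" using tu(1) tv(1) by (simp add: t_def tree_shift_def is_tree_def)
  moreover have "level_constant t"
    unfolding level_constant_def
  proof (intro allI impI)
    fix x y :: "bool list" assume "length x = length y"
    then show "t x = t y"
      using tu(1) tv(1) unfolding t_def tree_shift_level_breaking_iff
      by (metis length_drop level_constantD)
  qed
  ultimately have t: "t \<in> tree_shift A (level_breaking A)"
    by (simp add: tree_shift_level_breaking_iff)
  show "connected_through (tree_shift A (level_breaking A)) {x. length x = 1} u v"
    unfolding connected_through_def
  proof (intro bexI[OF _ t] conjI allI impI)
    show "occurs_at u t []"
      using \<open>n \<ge> 1\<close> by (auto simp: tu(2) occurs_at_restr_iff t_def)
  next
    fix w x assume "leaf u w" "x \<in> {x :: bool list. length x = 1}"
    with \<open>n \<ge> 1\<close> have "length (w @ x) = n" by (simp add: tu(2) leaf_restr_levels)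
    then show "occurs_at v t (w @ x)" by (simp add: tv(2) occurs_at_restr_iff t_def)
  qed
qed simp

lemma not_strongly_irreducible_level_breaking:
  assumes "a \<in> A" "b \<in> A" "a \<noteq> b"
  shows "\<not> strongly_irreducible A (tree_shift A (level_breaking A))"
proof
  assume "strongly_irreducible A (tree_shift A (level_breaking A))"
  then obtain P where P: "complete_prefix_code P" and
    glue: "\<And>u v. is_pattern A u \<Longrightarrow> is_pattern A v \<Longrightarrow>
       accepted (tree_shift A (level_breaking A)) u \<Longrightarrow> accepted (tree_shift A (level_breaking A)) v \<Longrightarrow>
       connected_through (tree_shift A (level_breaking A)) P u v"
    unfolding strongly_irreducible_def by blast
  obtain p where p: "p \<in> P" using P by (auto simp: complete_prefix_code_def)
  define s :: tree where "s x = (if x = [] then a else b)" for x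
  define D where "D = {[], [False], [True], [False, False]}"
  define u where "u = restr (\<lambda>_. a) D"
  define v where "v = restr s fork_support"
  have trees: "(\<lambda>_. a) \<in> tree_shift A (level_breaking A)" "s \<in> tree_shift A (level_breaking A)"
    using assms by (auto simp: tree_shift_level_breaking_iff is_tree_def level_constant_def s_def)
  have "prefix_closed D" by (auto simp: D_def prefix_closed_def append_eq_Cons_conv)
  then have "is_pattern A u"
    unfolding u_def using assms(1) by (intro is_pattern_restr) (auto simp: D_def is_tree_def)
  moreover have "is_pattern A v"
    unfolding v_def using assms(1,2)
    by (intro is_pattern_restr prefix_closed_fork_support) (auto simp: fork_support_def is_tree_def s_def)
  moreover have "accepted (tree_shift A (level_breaking A)) u"
    unfolding accepted_def u_def using trees(1) occurs_at_restr_root by blast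
  moreover have "accepted (tree_shift A (level_breaking A)) v"
    unfolding accepted_def v_def using trees(2) occurs_at_restr_root by blast
  ultimately have "connected_through (tree_shift A (level_breaking A)) P u v" by (rule glue)
  then obtain t where t: "t \<in> tree_shift A (level_breaking A)"
    and below: "\<And>w. leaf u w \<Longrightarrow> occurs_at v t (w @ p)"
    using p unfolding connected_through_def by blast
  text \<open>The leaves \<open>[True]\<close> and \<open>[False, False]\<close> lie on different levels, so
    the two copies of \<open>v\<close> below them put \<open>b\<close> and \<open>a\<close> on a common level.\<close>
  have "leaf u [True]" "leaf u [False, False]" by (auto simp: leaf_def u_def D_def)
  then have "t ([True] @ p @ [False]) = b" "t ([False, False] @ p) = a"
    using below[of "[True]"] below[of "[False, False]"]
    by (simp_all add: v_def occurs_at_restr_iff fork_support_def s_def)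
  moreover have "t ([True] @ p @ [False]) = t ([False, False] @ p)"
    using t level_constantD[of t "[True] @ p @ [False]" "[False, False] @ p"]
    by (simp add: tree_shift_level_breaking_iff)
  ultimately show False using assms(3) by simp
qed

theorem proposition3p8:
  shows "(\<exists>A F. finite A \<and> finite F \<and> (\<forall>u\<in>F. is_pattern A u) \<and>
            strongly_irreducible A (tree_shift A F) \<and>
            \<not> uniformly_block_gluing (tree_shift A F))
       \<and> (\<exists>A F. finite A \<and> (\<forall>u\<in>F. is_pattern A u) \<and>
            uniformly_block_gluing (tree_shift A F) \<and>
            \<not> strongly_irreducible A (tree_shift A F))"
proof (intro conjI)
  show "\<exists>A F. finite A \<and> finite F \<and> (\<forall>u\<in>F. is_pattern A u) \<and>
      strongly_irreducible A (tree_shift A F) \<and> \<not> uniformly_block_gluing (tree_shift A F)"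
    using finite_binary finite_forks is_pattern_forks
      strongly_irreducible_forks not_uniformly_block_gluing_forks by blast
  have "\<not> strongly_irreducible binary (tree_shift binary (level_breaking binary))"
    by (rule not_strongly_irreducible_level_breaking[of 0 _ 1]) (simp_all add: binary_def)
  moreover have "\<forall>u\<in>level_breaking binary. is_pattern binary u"
    by (simp add: level_breaking_def)
  ultimately show "\<exists>A F. finite A \<and> (\<forall>u\<in>F. is_pattern A u) \<and>
      uniformly_block_gluing (tree_shift A F) \<and> \<not> strongly_irreducible A (tree_shift A F)"
    using finite_binary uniformly_block_gluing_level_breaking by blast
qed

end
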